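(* Let $p$ be a positive continuous even function on $(-1,1)$ such that no nontrivial solution $u$ of $u''+pu=0$ has more than one zero in $(-1,1)$, and let $F$ be the solution of $\mathcal{S}F=2p$ on $(-1,1)$ with $F(0)=0$, $F'(0)=1$, $F''(0)=0$. Let $\varphi:(-1,1)\to\mathbb{R}^n$ be a $C^3$ curve with $\varphi'(x)\neq 0$ for all $x$, normalized by $\varphi(0)=0$, $|\varphi'(0)|=1$ and $\langle\varphi'(0),\varphi''(0)\rangle=0$. If $S_1\varphi(x)\le 2p(x)$ for all $x\in(-1,1)$, then for all $x\in(-1,1)$: (a) $|\varphi'(x)|\le F'(x)$, and (b) $\dfrac{|\varphi'(x)|}{1+|\varphi(x)|^2}\le \dfrac{F'(x)}{1+F(x)^2}$.
   Context: For a real function $g$ with $g'\neq0$, the Schwarzian derivative is $\mathcal{S}g=(g''/g')'-\tfrac12(g''/g')^2$. Equivalently, $F(x)=\int_0^x u_0(t)^{-2}\,dt$, where $u_0$ is the solution of $u''+pu=0$ with $u_0(0)=1$, $u_0'(0)=0$; $u_0$ has no zeros on $(-1,1)$, and $F$ is odd, strictly increasing, with $F'>0$. For a $C^3$ curve $\varphi$ on an interval into $\mathbb{R}^n$ with $\varphi'\neq0$, the Ahlfors Schwarzian is $$S_1\varphi=\frac{\langle\varphi',\varphi'''\rangle}{|\varphi'|^2}-3\frac{\langle\varphi',\varphi''\rangle^2}{|\varphi'|^4}+\frac32\frac{|\varphi''|^2}{|\varphi'|^2},$$ where $\langle\cdot,\cdot\rangle$ is the Euclidean inner product and $|\cdot|$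 the Euclidean norm. *)

theory Defs
  imports "HOL-Analysis.Analysis"
begin

definition schwarzian :: "(real \<Rightarrow> real) \<Rightarrow> real \<Rightarrow> real" where
  "schwarzian g x =
     deriv (\<lambda>t. deriv (deriv g) t / deriv g t) x - 1/2 * (deriv (deriv g) x / deriv g x)^2"

definition vd :: "(real \<Rightarrow> 'a::real_normed_vector) \<Rightarrow> real \<Rightarrow> 'a" where
  "vd \<phi> x = vector_derivative \<phi> (at x)"

definition ahlfors_S1 :: "(real \<Rightarrow> 'a::real_inner) \<Rightarrow> real \<Rightarrow> real" where
  "ahlfors_S1 \<phi> x =
     (vd \<phi> x \<bullet> vd (vd (vd \<phi>)) x) / (norm (vd \<phi> x))^2
     - 3 * (vd \<phi> x \<bullet> vd (vd \<phi>) x)^2 / (norm (vd \<phi> x))^4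
     + 3/2 * (norm (vd (vd \<phi>) x))^2 / (norm (vd \<phi> x))^2"

definition disconjugate :: "(real \<Rightarrow> real) \<Rightarrow> bool" where
  "disconjugate p \<longleftrightarrow>
     (\<forall>u. ((\<forall>x\<in>{-1<..<1}. u differentiable at x \<and> deriv u differentiable at x \<and>
              deriv (deriv u) x + p x * u x = 0)
           \<and> (\<exists>x\<in>{-1<..<1}. u x \<noteq> 0))
       \<longrightarrow> \<not> (\<exists>a\<in>{-1<..<1}. \<exists>b\<in>{-1<..<1}. a \<noteq> b \<and> u a = 0 \<and> u b = 0))"

end

theory Submission
  imports Defs
begin

text \<open>
  Both estimates are instances of one inequality, valid for every real \<open>\<epsilon>\<close>:
  \<open>|\<phi>'| / (1 + \<epsilon>\<^sup>2 |\<phi>|\<^sup>2) \<le> F' / (1 + \<epsilon>\<^sup>2 F\<^sup>2)\<close>; part (a) is \<open>\<epsilon> = 0\<close>, part (b) is \<open>\<epsilon> = 1\<close>.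
  For the model, \<open>\<S>F = 2 p\<close> means that \<open>u = (F')\<^sup>-\<^sup>1\<^sup>/\<^sup>2\<close> and \<open>u F\<close> solve \<open>u'' + p u = 0\<close>, so
  \<open>Y = (1 + \<epsilon> c F) / \<surd>F'\<close> is a solution.  For the curve, the weight
  \<open>h = (1 + \<epsilon>\<^sup>2 |\<phi>|\<^sup>2) / |\<phi>'|\<close> satisfies \<open>2 h h'' - h'\<^sup>2 + 2 (S\<^sub>1\<phi>) h\<^sup>2 - 4 \<epsilon>\<^sup>2 = |X|\<^sup>2\<close> for an
  explicit vector \<open>X\<close>, so \<open>S\<^sub>1\<phi> \<le> 2 p\<close> turns \<open>y = \<surd>h (cos \<theta> + c sin \<theta>)\<close>, \<open>\<theta>' = \<epsilon> / h\<close>, into a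
  subsolution \<open>y'' + p y \<ge> 0\<close> (where \<open>y \<ge> 0\<close>).  Both have the same data at \<open>0\<close>; a Sturm
  comparison gives \<open>Y \<le> y\<close> on the segment from \<open>0\<close> to \<open>x\<close>, and with \<open>c = \<epsilon> F(x)\<close> and
  \<open>cos \<theta> + c sin \<theta> \<le> \<surd>(1 + c\<^sup>2)\<close> this is the inequality at \<open>x\<close>.
\<close>

abbreviation has_derivs2 :: "(real \<Rightarrow> real) \<Rightarrow> (real \<Rightarrow> real) \<Rightarrow> real \<Rightarrow> real \<Rightarrow> bool" where
  "has_derivs2 y y1 d2 t \<equiv> (y has_real_derivative y1 t) (at t) \<and> (y1 has_real_derivative d2) (at t)"

text \<open>Sturm comparison on an interval where the subsolution \<open>y\<close> (\<open>y'' + q y \<ge> 0\<close> where \<open>y \<ge> 0\<close>)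
  is known to be nonnegative, against a positive supersolution \<open>Y\<close> with the same initial data:
  the Wronskian \<open>y' Y - y Y'\<close> is nondecreasing, hence so is \<open>y / Y\<close>.\<close>
lemma comparison_while_nonneg:
  fixes y y1 y2 Y Y1 Y2 q :: "real \<Rightarrow> real"
  assumes "a < b"
    and dy: "\<And>t. t \<in> {a..b} \<Longrightarrow> has_derivs2 y y1 (y2 t) t"
    and dY: "\<And>t. t \<in> {a..b} \<Longrightarrow> has_derivs2 Y Y1 (Y2 t) t"
    and Y_pos: "\<And>t. t \<in> {a..b} \<Longrightarrow> 0 < Y t"
    and Y_super: "\<And>t. t \<in> {a..b} \<Longrightarrow> Y2 t + q t * Y t \<le> 0"
    and y_sub: "\<And>t. t \<in> {a..b} \<Longrightarrow> 0 \<le> y t \<Longrightarrow> 0 \<le> y2 t + q t * y t"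
    and y_nonneg: "\<And>t. t \<in> {a<..<b} \<Longrightarrow> 0 \<le> y t"
    and init: "y a = Y a" "y1 a = Y1 a"
  shows "Y b \<le> y b"
proof -
  define W where "W t = y1 t * Y t - y t * Y1 t" for t
  have dW: "(W has_real_derivative y2 t * Y t - y t * Y2 t) (at t)" if "t \<in> {a..b}" for t
    unfolding W_def[abs_def] using dy[OF that] dY[OF that]
    by (auto intro!: derivative_eq_intros simp: algebra_simps)
  have dW_nonneg: "0 \<le> y2 t * Y t - y t * Y2 t" if "t \<in> {a<..<b}" for t
  proof -
    have t: "t \<in> {a..b}" using that by auto
    have "y2 t * Y t - y t * Y2 t = (y2 t + q t * y t) * Y t - y t * (Y2 t + q t * Y t)"
      by (simp add: algebra_simps)
    moreover have "0 \<le> (y2 t + q t * y t) * Y t"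
      using y_sub[OF t y_nonneg[OF that]] Y_pos[OF t] by simp
    moreover have "y t * (Y2 t + q t * Y t) \<le> 0"
      using y_nonneg[OF that] Y_super[OF t] by (simp add: mult_nonneg_nonpos)
    ultimately show ?thesis by linarith
  qed
  have W_nonneg: "0 \<le> W t" if "t \<in> {a..b}" for t
  proof -
    have "W a \<le> W t"
    proof (rule DERIV_nonneg_imp_increasing_open[of a t W])
      show "continuous_on {a..t} W"
        using that by (intro continuous_at_imp_continuous_on ballI DERIV_isCont[OF dW]) auto
      show "\<exists>z. (W has_real_derivative z) (at x) \<and> 0 \<le> z" if "a < x" "x < t" for x
        using that \<open>t \<in> {a..b}\<close> dW[of x] dW_nonneg[of x] by auto
    qed (use that in auto)
    then show ?thesis using init by (simp add: W_def)
  qed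
  have "y a / Y a \<le> y b / Y b"
  proof (rule DERIV_nonneg_imp_increasing_open[of a b "\<lambda>t. y t / Y t"])
    fix t assume "a < t" "t < b"
    then have t: "t \<in> {a..b}" by auto
    have "((\<lambda>t. y t / Y t) has_real_derivative W t / (Y t)\<^sup>2) (at t)"
      using dy[OF t] dY[OF t] Y_pos[OF t]
      by (auto intro!: derivative_eq_intros simp: W_def power2_eq_square)
    then show "\<exists>z. ((\<lambda>t. y t / Y t) has_real_derivative z) (at t) \<and> 0 \<le> z"
      using W_nonneg[OF t] by auto
  next
    show "continuous_on {a..b} (\<lambda>t. y t / Y t)"
      using dy dY Y_pos by (intro continuous_at_imp_continuous_on ballI continuous_intros DERIV_isCont)
        (auto, fastforce+)
  qed (use \<open>a < b\<close> in simp)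
  then show ?thesis using init Y_pos[of a] Y_pos[of b] \<open>a < b\<close> by (simp add: field_simps)
qed

text \<open>Sturm comparison to the right of the initial point: the subsolution \<open>y\<close> cannot vanish
  before the positive supersolution \<open>Y\<close> does, so the previous lemma applies on all of \<open>[a, b]\<close>.\<close>
lemma comparison_right:
  fixes y y1 y2 Y Y1 Y2 q :: "real \<Rightarrow> real"
  assumes "a < b"
    and dy: "\<And>t. t \<in> {a..b} \<Longrightarrow> has_derivs2 y y1 (y2 t) t"
    and dY: "\<And>t. t \<in> {a..b} \<Longrightarrow> has_derivs2 Y Y1 (Y2 t) t"
    and Y_pos: "\<And>t. t \<in> {a..b} \<Longrightarrow> 0 < Y t"
    and Y_super: "\<And>t. t \<in> {a..b} \<Longrightarrow> Y2 t + q t * Y t \<le> 0"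
    and y_sub: "\<And>t. t \<in> {a..b} \<Longrightarrow> 0 \<le> y t \<Longrightarrow> 0 \<le> y2 t + q t * y t"
    and init: "y a = Y a" "y1 a = Y1 a"
  shows "Y b \<le> y b"
proof -
  note compare = comparison_while_nonneg[of a _ y y1 y2 Y Y1 Y2 q]
  have y_pos: "0 < y t" if t: "t \<in> {a..b}" for t
  proof (rule ccontr)
    assume "\<not> 0 < y t"
    define Z where "Z = {s \<in> {a..b}. y s \<le> 0}"
    have "continuous_on {a..b} y"
      using dy by (intro continuous_at_imp_continuous_on ballI DERIV_isCont) blast
    then have "closed Z"
      unfolding Z_def by (rule continuous_on_closed_Collect_le) auto
    moreover have "Z \<noteq> {}" using t \<open>\<not> 0 < y t\<close> unfolding Z_def by auto
    moreover have "bdd_below Z" unfolding Z_def by (rule bdd_belowI[of _ a]) auto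
    ultimately have "Inf Z \<in> Z" by (intro closed_contains_Inf)
    define t1 where "t1 = Inf Z"
    have t1: "t1 \<in> {a..b}" "y t1 \<le> 0" using \<open>Inf Z \<in> Z\<close> unfolding t1_def Z_def by auto
    have "a < t1" using t1 init Y_pos[of a] by (cases "t1 = a") auto
    have "0 \<le> y s" if "s \<in> {a<..<t1}" for s
    proof (rule ccontr)
      assume "\<not> 0 \<le> y s"
      then have "s \<in> Z" using that t1 unfolding Z_def by auto
      then have "t1 \<le> s" unfolding t1_def using \<open>bdd_below Z\<close> by (rule cInf_lower)
      then show False using that by auto
    qed
    then have "Y t1 \<le> y t1"
      using t1 \<open>a < t1\<close> by (intro compare) (auto intro!: dy dY Y_pos Y_super y_sub init)
    then show False using Y_pos[OF t1(1)] t1(2) by auto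
  qed
  show ?thesis
    by (rule compare[OF \<open>a < b\<close> dy dY Y_pos Y_super y_sub _ init]) (use y_pos in \<open>auto simp: less_imp_le\<close>)
qed

text \<open>Sturm comparison on either side of the initial point \<open>x\<^sub>0\<close>; the left side reduces to the
  right side by the reflection \<open>t \<mapsto> -t\<close>, which preserves the differential inequalities.\<close>
lemma sturm_comparison:
  fixes y y1 y2 Y Y1 Y2 q :: "real \<Rightarrow> real" and x0 x :: real
  defines "J \<equiv> {min x0 x..max x0 x}"
  assumes dy: "\<And>t. t \<in> J \<Longrightarrow> has_derivs2 y y1 (y2 t) t"
    and dY: "\<And>t. t \<in> J \<Longrightarrow> has_derivs2 Y Y1 (Y2 t) t"
    and Y_pos: "\<And>t. t \<in> J \<Longrightarrow> 0 < Y t"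
    and Y_super: "\<And>t. t \<in> J \<Longrightarrow> Y2 t + q t * Y t \<le> 0"
    and y_sub: "\<And>t. t \<in> J \<Longrightarrow> 0 \<le> y t \<Longrightarrow> 0 \<le> y2 t + q t * y t"
    and init: "y x0 = Y x0" "y1 x0 = Y1 x0"
  shows "Y x \<le> y x"
proof (cases x0 x rule: linorder_cases)
  case less
  then show ?thesis
    using comparison_right[of x0 x y y1 y2 Y Y1 Y2 q] assms by auto
next
  case equal
  then show ?thesis using init by simp
next
  case greater
  have mirror: "-t \<in> J" if "t \<in> {-x0..-x}" for t using that greater unfolding J_def by auto
  have "Y (- (- x)) \<le> y (- (- x))"
  proof (rule comparison_right[of "-x0" "-x" "\<lambda>t. y (-t)" "\<lambda>t. - y1 (-t)" "\<lambda>t. y2 (-t)"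
        "\<lambda>t. Y (-t)" "\<lambda>t. - Y1 (-t)" "\<lambda>t. Y2 (-t)" "\<lambda>t. q (-t)"])
    fix t assume t: "t \<in> {-x0..-x}"
    show "has_derivs2 (\<lambda>t. y (-t)) (\<lambda>t. - y1 (-t)) (y2 (- t)) t"
      using dy[OF mirror[OF t]] by (auto simp: DERIV_mirror dest: DERIV_minus)
    show "has_derivs2 (\<lambda>t. Y (-t)) (\<lambda>t. - Y1 (-t)) (Y2 (- t)) t"
      using dY[OF mirror[OF t]] by (auto simp: DERIV_mirror dest: DERIV_minus)
  qed (use greater init Y_pos Y_super y_sub mirror in auto)
  then show ?thesis by simp
qed

lemma sqrt_derivs2:
  fixes h h1 :: "real \<Rightarrow> real"
  assumes "0 < h t" and "has_derivs2 h h1 h2 t"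
  shows "has_derivs2 (\<lambda>x. sqrt (h x)) (\<lambda>x. h1 x / (2 * sqrt (h x)))
           ((2 * h t * h2 - (h1 t)\<^sup>2) / (4 * h t * sqrt (h t))) t"
proof -
  have "sqrt (h t) * sqrt (h t) = h t" using assms by simp
  then show ?thesis
    using assms by (auto intro!: derivative_eq_intros simp: field_simps power2_eq_square)
qed

lemma oscillating_subsolution:
  fixes h h1 h2 \<theta> q y y1 y2 :: "real \<Rightarrow> real"
  assumes h_pos: "0 < h t" and dh: "has_derivs2 h h1 (h2 t) t"
    and d\<theta>: "(\<theta> has_real_derivative \<omega> / h t) (at t)"
    and K: "4 * \<omega>\<^sup>2 \<le> 2 * h t * h2 t - (h1 t)\<^sup>2 + 4 * q t * (h t)\<^sup>2"
    and y: "y = (\<lambda>x. sqrt (h x) * (cos (\<theta> x) + c * sin (\<theta> x)))"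
    and y1: "y1 = (\<lambda>x. h1 x / (2 * sqrt (h x)) * (cos (\<theta> x) + c * sin (\<theta> x))
                      + \<omega> * (c * cos (\<theta> x) - sin (\<theta> x)) / sqrt (h x))"
    and y2: "y2 = (\<lambda>x. ((2 * h x * h2 x - (h1 x)\<^sup>2) / (4 * h x * sqrt (h x)) - \<omega>\<^sup>2 / (h x * sqrt (h x)))
                      * (cos (\<theta> x) + c * sin (\<theta> x)))"
  shows "has_derivs2 y y1 (y2 t) t" and "0 \<le> y t \<Longrightarrow> 0 \<le> y2 t + q t * y t"
proof -
  define C where "C x = cos (\<theta> x) + c * sin (\<theta> x)" for x
  define S where "S x = c * cos (\<theta> x) - sin (\<theta> x)" for x
  obtain r where r: "0 < r" "sqrt (h t) = r" "h t = r\<^sup>2"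
    using h_pos by (intro that[of "sqrt (h t)"]) auto
  note v = sqrt_derivs2[OF h_pos dh]
  have dC: "(C has_real_derivative \<omega> * S t / h t) (at t)"
    unfolding C_def[abs_def] S_def using d\<theta> h_pos
    by (auto intro!: derivative_eq_intros simp: field_simps)
  have dS: "(S has_real_derivative - \<omega> * C t / h t) (at t)"
    unfolding S_def[abs_def] C_def using d\<theta> h_pos
    by (auto intro!: derivative_eq_intros simp: field_simps)
  show "has_derivs2 y y1 (y2 t) t"
  proof
    show "(y has_real_derivative y1 t) (at t)"
      unfolding y y1 C_def[symmetric] S_def[symmetric]
      by (rule DERIV_cong[OF DERIV_mult[OF conjunct1[OF v] dC]])
        (use r in \<open>simp add: field_simps power2_eq_square\<close>)
    show "(y1 has_real_derivative y2 t) (at t)"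
      unfolding y1 y2 C_def[symmetric] S_def[symmetric]
      by (rule DERIV_cong[OF DERIV_add[OF DERIV_mult[OF conjunct2[OF v] dC]
            DERIV_divide[OF DERIV_cmult[OF dS] conjunct1[OF v]]]])
        (use r in \<open>simp_all add: field_simps power2_eq_square\<close>)
  qed
  assume "0 \<le> y t"
  then have "0 \<le> C t" using r unfolding y C_def by (simp add: zero_le_mult_iff)
  have "y2 t + q t * y t
      = (2 * h t * h2 t - (h1 t)\<^sup>2 + 4 * q t * (h t)\<^sup>2 - 4 * \<omega>\<^sup>2) / (4 * h t * sqrt (h t)) * C t"
    unfolding y y2 C_def using r by (simp add: field_simps power2_eq_square)
  also have "\<dots> \<ge> 0" using K h_pos \<open>0 \<le> C t\<close> by simp
  finally show "0 \<le> y2 t + q t * y t" .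
qed

lemma schwarzian_liouville:
  fixes F1 F2 u u1 :: "real \<Rightarrow> real"
  assumes F1_pos: "0 < F1 t" and dF1: "has_derivs2 F1 F2 F3 t"
    and schwarz: "(F3 * F1 t - (F2 t)\<^sup>2) / (F1 t)\<^sup>2 - 1/2 * (F2 t / F1 t)\<^sup>2 = 2 * q"
    and u: "u = (\<lambda>x. 1 / sqrt (F1 x))"
    and u1: "u1 = (\<lambda>x. - F2 x / (2 * F1 x * sqrt (F1 x)))"
  shows "has_derivs2 u u1 (- q * u t) t"
proof -
  obtain r where r: "0 < r" "sqrt (F1 t) = r" "F1 t = r\<^sup>2"
    using F1_pos by (intro that[of "sqrt (F1 t)"]) auto
  have "(F3 * F1 t - (F2 t)\<^sup>2) / (F1 t)\<^sup>2 - 1/2 * (F2 t / F1 t)\<^sup>2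
      = (2 * F3 * F1 t - 3 * (F2 t)\<^sup>2) / (2 * (F1 t)\<^sup>2)"
    using F1_pos by (simp add: field_simps power2_eq_square)
  then have q: "q = (2 * F3 * F1 t - 3 * (F2 t)\<^sup>2) / (4 * (F1 t)\<^sup>2)"
    using schwarz by simp
  show ?thesis
    unfolding u u1 using dF1 F1_pos
    by (auto intro!: derivative_eq_intros) (use r in \<open>simp_all add: q field_simps power2_eq_square\<close>)
qed

lemma reduction_of_order:
  fixes u u1 F Y Y1 :: "real \<Rightarrow> real"
  assumes u_pos: "0 < u t" and du: "has_derivs2 u u1 (- q * u t) t"
    and dF: "(F has_real_derivative 1 / (u t)\<^sup>2) (at t)"
    and Y: "Y = (\<lambda>x. u x * (1 + c * F x))"
    and Y1: "Y1 = (\<lambda>x. u1 x * (1 + c * F x) + c / u x)"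
  shows "has_derivs2 Y Y1 (- q * Y t) t"
  unfolding Y Y1 using du dF u_pos
  by (auto intro!: derivative_eq_intros simp: field_simps power2_eq_square)

text \<open>The algebraic heart of the argument, pointwise: let \<open>x\<close> be the position and \<open>v\<^sub>1, v\<^sub>2, v\<^sub>3\<close>
  the first three derivatives of the curve at some time, and \<open>h, h', h''\<close> the weight
  \<open>(1 + k |x|\<^sup>2) / |v\<^sub>1|\<close> and its derivatives (as computed in the next lemmas); then \<open>2 h h'' - h'\<^sup>2 + 2 (S\<^sub>1\<phi>) h\<^sup>2 - 4 k\<close> is the squared
  norm of a combination of the components of \<open>x\<close> and \<open>v\<^sub>2\<close> orthogonal to \<open>v\<^sub>1\<close>.\<close>
lemma ahlfors_identity:
  fixes x v1 v2 v3 :: "'a::real_inner" and k :: real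
  assumes "v1 \<noteq> 0"
  defines "s \<equiv> norm v1" and "P \<equiv> 1 + k * (x \<bullet> x)" and "E \<equiv> x \<bullet> v1" and "A \<equiv> v1 \<bullet> v2"
  defines "X \<equiv> (2 * k) *\<^sub>R (x - (E / s\<^sup>2) *\<^sub>R v1) + (P / s\<^sup>2) *\<^sub>R (v2 - (A / s\<^sup>2) *\<^sub>R v1)"
  shows "2 * (P / s) * (2 * k * (s\<^sup>2 + x \<bullet> v2) / s - 4 * k * E * A / s ^ 3
            - P * (v2 \<bullet> v2 + v1 \<bullet> v3) / s ^ 3 + 3 * P * A\<^sup>2 / s ^ 5)
         - (2 * k * E / s - P * A / s ^ 3)\<^sup>2
         + 2 * ((v1 \<bullet> v3) / s\<^sup>2 - 3 * A\<^sup>2 / s ^ 4 + 3/2 * (norm v2)\<^sup>2 / s\<^sup>2) * (P / s)\<^sup>2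
         - 4 * k = X \<bullet> X"
proof -
  have s: "0 < s" "v1 \<bullet> v1 = s\<^sup>2" using assms(1) by (simp_all add: s_def power2_norm_eq_inner)
  show ?thesis
    unfolding X_def power2_norm_eq_inner[of v2] using s
    by (simp add: inner_simps inner_commute field_simps eval_nat_numeral P_def E_def A_def
        power2_norm_eq_inner)
qed

lemma DERIV_inner:
  fixes f g :: "real \<Rightarrow> 'a::real_inner"
  assumes "(f has_vector_derivative f') (at t)" and "(g has_vector_derivative g') (at t)"
  shows "((\<lambda>x. f x \<bullet> g x) has_real_derivative f' \<bullet> g t + f t \<bullet> g') (at t)"
proof -
  have "((\<lambda>x. f x \<bullet> g x) has_derivative (\<lambda>h. f t \<bullet> (h *\<^sub>R g') + (h *\<^sub>R f') \<bullet> g t)) (at t)"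
    using assms unfolding has_vector_derivative_def by (intro has_derivative_inner)
  then show ?thesis unfolding has_field_derivative_def
    by (rule has_derivative_eq_rhs) (auto simp: algebra_simps fun_eq_iff inner_commute)
qed

lemma curve_weight_derivs:
  fixes \<phi> V1 V2 :: "real \<Rightarrow> 'a::real_inner" and h h1 h2 :: "real \<Rightarrow> real"
  assumes d\<phi>: "(\<phi> has_vector_derivative V1 t) (at t)"
    and dV1: "(V1 has_vector_derivative V2 t) (at t)"
    and dV2: "(V2 has_vector_derivative V3 t) (at t)"
    and nz: "V1 t \<noteq> 0"
    and h: "h = (\<lambda>x. (1 + k * (\<phi> x \<bullet> \<phi> x)) / norm (V1 x))"
    and h1: "h1 = (\<lambda>x. 2 * k * (\<phi> x \<bullet> V1 x) / norm (V1 x)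
                     - (1 + k * (\<phi> x \<bullet> \<phi> x)) * (V1 x \<bullet> V2 x) / norm (V1 x) ^ 3)"
    and h2: "h2 = (\<lambda>x. 2 * k * ((norm (V1 x))\<^sup>2 + \<phi> x \<bullet> V2 x) / norm (V1 x)
                     - 4 * k * (\<phi> x \<bullet> V1 x) * (V1 x \<bullet> V2 x) / norm (V1 x) ^ 3
                     - (1 + k * (\<phi> x \<bullet> \<phi> x)) * (V2 x \<bullet> V2 x + V1 x \<bullet> V3 x) / norm (V1 x) ^ 3
                     + 3 * (1 + k * (\<phi> x \<bullet> \<phi> x)) * (V1 x \<bullet> V2 x)\<^sup>2 / norm (V1 x) ^ 5)"
  shows "has_derivs2 h h1 (h2 t) t"
proof -
  define P where "P x = 1 + k * (\<phi> x \<bullet> \<phi> x)" for x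
  define E where "E x = \<phi> x \<bullet> V1 x" for x
  define A where "A x = V1 x \<bullet> V2 x" for x
  define s where "s x = norm (V1 x)" for x
  have s_pos: "0 < s t" using nz by (simp add: s_def)
  have dP: "(P has_real_derivative 2 * k * E t) (at t)"
    unfolding P_def[abs_def] E_def using DERIV_inner[OF d\<phi> d\<phi>]
    by (auto intro!: derivative_eq_intros simp: inner_commute)
  have dE: "(E has_real_derivative (s t)\<^sup>2 + \<phi> t \<bullet> V2 t) (at t)"
    unfolding E_def[abs_def] s_def using DERIV_inner[OF d\<phi> dV1] by (simp add: power2_norm_eq_inner)
  have dA: "(A has_real_derivative V2 t \<bullet> V2 t + V1 t \<bullet> V3 t) (at t)"
    unfolding A_def[abs_def] using DERIV_inner[OF dV1 dV2] by (simp add: inner_commute)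
  have ds: "(s has_real_derivative A t / s t) (at t)"
  proof -
    have "0 < V1 t \<bullet> V1 t" using nz by simp
    then have "((\<lambda>x. sqrt (V1 x \<bullet> V1 x)) has_real_derivative
        inverse (sqrt (V1 t \<bullet> V1 t)) / 2 * (2 * A t)) (at t)"
      using DERIV_inner[OF dV1 dV1]
      by (intro DERIV_chain2[OF DERIV_real_sqrt]) (simp_all add: A_def inner_commute)
    then show ?thesis by (simp add: s_def[abs_def] norm_eq_sqrt_inner field_simps)
  qed
  have h': "h = (\<lambda>x. P x / s x)" "h1 = (\<lambda>x. 2 * k * E x / s x - P x * A x / s x ^ 3)"
    "h2 = (\<lambda>x. 2 * k * ((s x)\<^sup>2 + \<phi> x \<bullet> V2 x) / s x - 4 * k * E x * A x / s x ^ 3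
            - P x * (V2 x \<bullet> V2 x + V1 x \<bullet> V3 x) / s x ^ 3 + 3 * P x * (A x)\<^sup>2 / s x ^ 5)"
    by (simp_all add: h h1 h2 P_def E_def A_def s_def)
  show ?thesis
    unfolding h' using dP dE dA ds s_pos
    by (auto intro!: derivative_eq_intros simp: field_simps eval_nat_numeral)
qed

lemma curve_weight_inequality:
  fixes \<phi> V1 V2 V3 :: "real \<Rightarrow> 'a::real_inner" and q :: "real \<Rightarrow> real" and k :: real
  defines "h \<equiv> \<lambda>x. (1 + k * (\<phi> x \<bullet> \<phi> x)) / norm (V1 x)"
  assumes d: "\<And>t. t \<in> I \<Longrightarrow> (\<phi> has_vector_derivative V1 t) (at t)
      \<and> (V1 has_vector_derivative V2 t) (at t) \<and> (V2 has_vector_derivative V3 t) (at t)"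
    and nz: "\<And>t. t \<in> I \<Longrightarrow> V1 t \<noteq> 0"
    and S1: "\<And>t. t \<in> I \<Longrightarrow> (V1 t \<bullet> V3 t) / (norm (V1 t))\<^sup>2
      - 3 * (V1 t \<bullet> V2 t)\<^sup>2 / (norm (V1 t))^4 + 3/2 * (norm (V2 t))\<^sup>2 / (norm (V1 t))\<^sup>2 \<le> 2 * q t"
  obtains h1 h2 where "\<And>t. t \<in> I \<Longrightarrow> has_derivs2 h h1 (h2 t) t"
    and "\<And>t. t \<in> I \<Longrightarrow> 4 * k \<le> 2 * h t * h2 t - (h1 t)\<^sup>2 + 4 * q t * (h t)\<^sup>2"
    and "\<And>t. h1 t = 2 * k * (\<phi> t \<bullet> V1 t) / norm (V1 t)
      - (1 + k * (\<phi> t \<bullet> \<phi> t)) * (V1 t \<bullet> V2 t) / norm (V1 t) ^ 3"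
proof -
  define h1 where "h1 x = 2 * k * (\<phi> x \<bullet> V1 x) / norm (V1 x)
      - (1 + k * (\<phi> x \<bullet> \<phi> x)) * (V1 x \<bullet> V2 x) / norm (V1 x) ^ 3" for x
  define h2 where "h2 x = 2 * k * ((norm (V1 x))\<^sup>2 + \<phi> x \<bullet> V2 x) / norm (V1 x)
      - 4 * k * (\<phi> x \<bullet> V1 x) * (V1 x \<bullet> V2 x) / norm (V1 x) ^ 3
      - (1 + k * (\<phi> x \<bullet> \<phi> x)) * (V2 x \<bullet> V2 x + V1 x \<bullet> V3 x) / norm (V1 x) ^ 3
      + 3 * (1 + k * (\<phi> x \<bullet> \<phi> x)) * (V1 x \<bullet> V2 x)\<^sup>2 / norm (V1 x) ^ 5" for x
  show ?thesis
  proof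
    show "h1 t = 2 * k * (\<phi> t \<bullet> V1 t) / norm (V1 t)
      - (1 + k * (\<phi> t \<bullet> \<phi> t)) * (V1 t \<bullet> V2 t) / norm (V1 t) ^ 3" for t
      by (simp add: h1_def)
  next
    fix t assume t: "t \<in> I"
    show "has_derivs2 h h1 (h2 t) t"
      using d[OF t] nz[OF t] by (intro curve_weight_derivs) (auto simp: h_def h1_def[abs_def] h2_def[abs_def])
    have X: "0 \<le> 2 * h t * h2 t - (h1 t)\<^sup>2 + 2 * ((V1 t \<bullet> V3 t) / (norm (V1 t))\<^sup>2
        - 3 * (V1 t \<bullet> V2 t)\<^sup>2 / (norm (V1 t))^4 + 3/2 * (norm (V2 t))\<^sup>2 / (norm (V1 t))\<^sup>2) * (h t)\<^sup>2
        - 4 * k"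
      unfolding h_def h1_def h2_def ahlfors_identity[OF nz[OF t], of k "\<phi> t" "V2 t" "V3 t"]
      by (rule inner_ge_zero)
    have "2 * ((V1 t \<bullet> V3 t) / (norm (V1 t))\<^sup>2 - 3 * (V1 t \<bullet> V2 t)\<^sup>2 / (norm (V1 t))^4
        + 3/2 * (norm (V2 t))\<^sup>2 / (norm (V1 t))\<^sup>2) * (h t)\<^sup>2 \<le> 4 * q t * (h t)\<^sup>2"
      using S1[OF t] by (intro mult_right_mono) auto
    with X show "4 * k \<le> 2 * h t * h2 t - (h1 t)\<^sup>2 + 4 * q t * (h t)\<^sup>2"
      by linarith
  qed
qed

lemma weight_comparison:
  fixes h h1 h2 \<theta> F F1 F2 F3 p :: "real \<Rightarrow> real" and x :: real
  defines "J \<equiv> {min 0 x..max 0 x}"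
  assumes h_pos: "\<And>t. t \<in> J \<Longrightarrow> 0 < h t"
    and dh: "\<And>t. t \<in> J \<Longrightarrow> has_derivs2 h h1 (h2 t) t"
    and d\<theta>: "\<And>t. t \<in> J \<Longrightarrow> (\<theta> has_real_derivative \<omega> / h t) (at t)"
    and K: "\<And>t. t \<in> J \<Longrightarrow> 4 * \<omega>\<^sup>2 \<le> 2 * h t * h2 t - (h1 t)\<^sup>2 + 4 * p t * (h t)\<^sup>2"
    and dF: "\<And>t. t \<in> J \<Longrightarrow> (F has_real_derivative F1 t) (at t) \<and> has_derivs2 F1 F2 (F3 t) t"
    and F1_pos: "\<And>t. t \<in> J \<Longrightarrow> 0 < F1 t"
    and schwarz: "\<And>t. t \<in> J \<Longrightarrow> (F3 t * F1 t - (F2 t)\<^sup>2) / (F1 t)\<^sup>2 - 1/2 * (F2 t / F1 t)\<^sup>2 = 2 * p t"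
    and F_sign: "\<And>t. t \<in> J \<Longrightarrow> 0 \<le> \<omega> * c * F t"
    and init: "h 0 = 1" "h1 0 = 0" "\<theta> 0 = 0" "F 0 = 0" "F1 0 = 1" "F2 0 = 0"
  shows "(1 + \<omega> * c * F x) / sqrt (F1 x) \<le> sqrt (h x) * (cos (\<theta> x) + c * sin (\<theta> x))"
proof -
  define u where "u = (\<lambda>x. 1 / sqrt (F1 x))"
  define u1 where "u1 = (\<lambda>x. - F2 x / (2 * F1 x * sqrt (F1 x)))"
  define Y where "Y = (\<lambda>x. u x * (1 + \<omega> * c * F x))"
  define Y1 where "Y1 = (\<lambda>x. u1 x * (1 + \<omega> * c * F x) + \<omega> * c / u x)"
  define y where "y = (\<lambda>x. sqrt (h x) * (cos (\<theta> x) + c * sin (\<theta> x)))"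
  define y1 where "y1 = (\<lambda>x. h1 x / (2 * sqrt (h x)) * (cos (\<theta> x) + c * sin (\<theta> x))
                      + \<omega> * (c * cos (\<theta> x) - sin (\<theta> x)) / sqrt (h x))"
  define y2 where "y2 = (\<lambda>x. ((2 * h x * h2 x - (h1 x)\<^sup>2) / (4 * h x * sqrt (h x))
                      - \<omega>\<^sup>2 / (h x * sqrt (h x))) * (cos (\<theta> x) + c * sin (\<theta> x)))"
  have y_props: "has_derivs2 y y1 (y2 t) t" "0 \<le> y t \<Longrightarrow> 0 \<le> y2 t + p t * y t" if t: "t \<in> J" for t
    using oscillating_subsolution[where h=h and t=t and ?h2.0=h2 and q=p, OF h_pos[OF t] dh[OF t] d\<theta>[OF t] K[OF t] y_def y1_def y2_def]
    by auto
  have dY: "has_derivs2 Y Y1 (- p t * Y t) t" if t: "t \<in> J" for t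
  proof (rule reduction_of_order[OF _ _ _ Y_def Y1_def])
    show "0 < u t" using F1_pos[OF t] by (simp add: u_def)
    show "has_derivs2 u u1 (- p t * u t) t"
      using dF[OF t] F1_pos[OF t] schwarz[OF t] by (intro schwarzian_liouville[OF _ _ _ u_def u1_def]) auto
    show "(F has_real_derivative 1 / (u t)\<^sup>2) (at t)"
      using dF[OF t] F1_pos[OF t] by (simp add: u_def power_divide)
  qed
  have "Y x \<le> y x"
  proof (rule sturm_comparison[of 0 x y y1 y2 Y Y1 "\<lambda>t. - p t * Y t" p])
    fix t assume t: "t \<in> {min 0 x..max 0 x}"
    then have tJ: "t \<in> J" by (simp add: J_def)
    show "has_derivs2 y y1 (y2 t) t" "has_derivs2 Y Y1 (- p t * Y t) t"
      using y_props(1)[OF tJ] dY[OF tJ] by auto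
    show "0 < Y t"
      using F1_pos[OF tJ] F_sign[OF tJ] by (simp add: Y_def u_def add_pos_nonneg)
    show "- p t * Y t + p t * Y t \<le> 0" by simp
    show "0 \<le> y t \<Longrightarrow> 0 \<le> y2 t + p t * y t" using y_props(2)[OF tJ] by simp
  qed (simp_all add: init y_def y1_def Y_def Y1_def u_def u1_def)
  then show ?thesis by (simp add: Y_def y_def u_def)
qed

text \<open>Cauchy--Schwarz for the oscillating factor.\<close>
lemma cos_plus_sin_le:
  fixes \<theta> c :: real
  shows "cos \<theta> + c * sin \<theta> \<le> sqrt (1 + c\<^sup>2)"
proof (rule real_le_rsqrt)
  have "(cos \<theta> + c * sin \<theta>)\<^sup>2 + (c * cos \<theta> - sin \<theta>)\<^sup>2 = (1 + c\<^sup>2) * ((sin \<theta>)\<^sup>2 + (cos \<theta>)\<^sup>2)"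
    by algebra
  then have "(cos \<theta> + c * sin \<theta>)\<^sup>2 + (c * cos \<theta> - sin \<theta>)\<^sup>2 = 1 + c\<^sup>2" by simp
  then show "(cos \<theta> + c * sin \<theta>)\<^sup>2 \<le> 1 + c\<^sup>2"
    using zero_le_power2[of "c * cos \<theta> - sin \<theta>"] by linarith
qed

lemma weight_bound_from_comparison:
  fixes h F1 C c :: real
  assumes "0 < h" "0 < F1"
    and cmp: "(1 + c\<^sup>2) / sqrt F1 \<le> sqrt h * C" and C: "C \<le> sqrt (1 + c\<^sup>2)"
  shows "1 + c\<^sup>2 \<le> h * F1"
proof -
  define r where "r = sqrt (1 + c\<^sup>2)"
  have r: "0 < r" "r\<^sup>2 = 1 + c\<^sup>2" by (simp_all add: r_def add_pos_nonneg)
  have "sqrt h * C \<le> sqrt h * r"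
    using C \<open>0 < h\<close> by (intro mult_left_mono) (simp_all add: r_def)
  then have "r * r / sqrt F1 \<le> sqrt h * r"
    using cmp r(2) by (simp add: power2_eq_square)
  then have "r \<le> sqrt h * sqrt F1"
    using r(1) \<open>0 < F1\<close> by (simp add: field_simps)
  then have "r\<^sup>2 \<le> (sqrt h * sqrt F1)\<^sup>2"
    using r(1) by (intro power_mono) auto
  then show ?thesis using r(2) assms(1,2) by (simp add: power_mult_distrib)
qed

lemma antiderivative_open_interval:
  fixes f :: "real \<Rightarrow> real"
  assumes "\<And>t. t \<in> {a<..<b} \<Longrightarrow> isCont f t" and "a < b"
  obtains G where "\<And>t. t \<in> {a<..<b} \<Longrightarrow> (G has_real_derivative f t) (at t)"
proof -
  obtain G where "\<And>t. t \<in> {a<..<b} \<Longrightarrow> (G has_vector_derivative f t) (at t)"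
    using einterval_antiderivative[of a b f] assms by force
  then show ?thesis
    by (intro that[of G]) (simp add: has_real_derivative_iff_has_vector_derivative)
qed

lemma increasing_same_sign:
  fixes F F1 :: "real \<Rightarrow> real"
  assumes dF: "\<And>t. t \<in> {a<..<b} \<Longrightarrow> (F has_real_derivative F1 t) (at t)"
    and F1_nonneg: "\<And>t. t \<in> {a<..<b} \<Longrightarrow> 0 \<le> F1 t"
    and "x0 \<in> {a<..<b}" "x \<in> {a<..<b}" "t \<in> {min x0 x..max x0 x}"
  shows "0 \<le> (F x - F x0) * (F t - F x0)"
proof -
  have mono: "F s \<le> F r" if sr: "s \<le> r" "s \<in> {a<..<b}" "r \<in> {a<..<b}" for s r
  proof (rule DERIV_nonneg_imp_increasing_open[of s r F])
    have sub: "{s..r} \<subseteq> {a<..<b}" using sr by auto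
    then show "continuous_on {s..r} F"
      using dF by (intro continuous_at_imp_continuous_on ballI DERIV_isCont) blast
    show "\<exists>y. (F has_real_derivative y) (at z) \<and> 0 \<le> y" if "s < z" "z < r" for z
    proof -
      have "z \<in> {a<..<b}" using sr that by auto
      then show ?thesis using dF F1_nonneg by blast
    qed
  qed fact
  have "t \<in> {a<..<b}" using assms(3-5) by auto
  then show ?thesis
    using assms(3-5) mono[of x0 t] mono[of t x] mono[of t x0] mono[of x t]
    by (cases "x0 \<le> x") (auto intro: mult_nonneg_nonneg mult_nonpos_nonpos)
qed

lemma curve_metric_bound:
  fixes \<phi> V1 V2 V3 :: "real \<Rightarrow> 'a::real_inner" and F F1 F2 F3 p :: "real \<Rightarrow> real"
    and a b x \<epsilon> :: real
  defines "I \<equiv> {a<..<b}"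
  assumes "0 \<in> I" and "x \<in> I"
    and d\<phi>: "\<And>t. t \<in> I \<Longrightarrow> (\<phi> has_vector_derivative V1 t) (at t)
      \<and> (V1 has_vector_derivative V2 t) (at t) \<and> (V2 has_vector_derivative V3 t) (at t)"
    and nz: "\<And>t. t \<in> I \<Longrightarrow> V1 t \<noteq> 0"
    and S1: "\<And>t. t \<in> I \<Longrightarrow> (V1 t \<bullet> V3 t) / (norm (V1 t))\<^sup>2
      - 3 * (V1 t \<bullet> V2 t)\<^sup>2 / (norm (V1 t))^4 + 3/2 * (norm (V2 t))\<^sup>2 / (norm (V1 t))\<^sup>2 \<le> 2 * p t"
    and dF: "\<And>t. t \<in> I \<Longrightarrow> (F has_real_derivative F1 t) (at t) \<and> has_derivs2 F1 F2 (F3 t) t"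
    and F1_pos: "\<And>t. t \<in> I \<Longrightarrow> 0 < F1 t"
    and schwarz: "\<And>t. t \<in> I \<Longrightarrow> (F3 t * F1 t - (F2 t)\<^sup>2) / (F1 t)\<^sup>2 - 1/2 * (F2 t / F1 t)\<^sup>2 = 2 * p t"
    and \<phi>_init: "\<phi> 0 = 0" "norm (V1 0) = 1" "V1 0 \<bullet> V2 0 = 0"
    and F_init: "F 0 = 0" "F1 0 = 1" "F2 0 = 0"
  shows "norm (V1 x) / (1 + \<epsilon>\<^sup>2 * (norm (\<phi> x))\<^sup>2) \<le> F1 x / (1 + \<epsilon>\<^sup>2 * (F x)\<^sup>2)"
proof -
  define h where "h \<equiv> \<lambda>x. (1 + \<epsilon>\<^sup>2 * (\<phi> x \<bullet> \<phi> x)) / norm (V1 x)"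
  obtain h1 h2 where dh: "\<And>t. t \<in> I \<Longrightarrow> has_derivs2 h h1 (h2 t) t"
    and K: "\<And>t. t \<in> I \<Longrightarrow> 4 * \<epsilon>\<^sup>2 \<le> 2 * h t * h2 t - (h1 t)\<^sup>2 + 4 * p t * (h t)\<^sup>2"
    and h1: "\<And>t. h1 t = 2 * \<epsilon>\<^sup>2 * (\<phi> t \<bullet> V1 t) / norm (V1 t)
      - (1 + \<epsilon>\<^sup>2 * (\<phi> t \<bullet> \<phi> t)) * (V1 t \<bullet> V2 t) / norm (V1 t) ^ 3"
    using curve_weight_inequality[of I \<phi> V1 V2 V3 p "\<epsilon>\<^sup>2"] d\<phi> nz S1 unfolding h_def by blast
  have h1_0: "h1 0 = 0" using h1[of 0] \<phi>_init by simp
  have h_pos: "0 < h t" if "t \<in> I" for t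
    using nz[OF that] by (simp add: h_def add_pos_nonneg)
  have "isCont (\<lambda>t. 1 / h t) t" if "t \<in> I" for t
    using DERIV_isCont[OF conjunct1[OF dh[OF that]]] h_pos[OF that] by (auto intro!: continuous_intros)
  moreover have "a < b" using \<open>0 \<in> I\<close> by (simp add: I_def)
  ultimately obtain G where dG: "\<And>t. t \<in> I \<Longrightarrow> (G has_real_derivative 1 / h t) (at t)"
    using antiderivative_open_interval[of a b "\<lambda>t. 1 / h t"] unfolding I_def by blast
  define \<theta> where "\<theta> t = \<epsilon> * (G t - G 0)" for t
  have d\<theta>: "(\<theta> has_real_derivative \<epsilon> / h t) (at t)" if "t \<in> I" for t
    unfolding \<theta>_def[abs_def] using dG[OF that] by (auto intro!: derivative_eq_intros)
  define c where "c = \<epsilon> * F x"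
  have J: "t \<in> I" if "t \<in> {min 0 x..max 0 x}" for t
    using that \<open>0 \<in> I\<close> \<open>x \<in> I\<close> unfolding I_def by auto
  text \<open>Between \<open>0\<close> and \<open>x\<close>, \<open>F\<close> has the sign of \<open>F x\<close>, so the model solution stays positive.\<close>
  have F_sign: "0 \<le> \<epsilon> * c * F t" if "t \<in> {min 0 x..max 0 x}" for t
  proof -
    have "0 \<le> F x * F t"
      using increasing_same_sign[of a b F F1 0 x t] dF F1_pos that \<open>0 \<in> I\<close> \<open>x \<in> I\<close> F_init(1)
      unfolding I_def by (auto intro: less_imp_le)
    then have "0 \<le> \<epsilon>\<^sup>2 * (F x * F t)" by simp
    then show ?thesis by (simp add: c_def power2_eq_square mult.assoc)
  qed
  have cmp: "(1 + \<epsilon> * c * F x) / sqrt (F1 x) \<le> sqrt (h x) * (cos (\<theta> x) + c * sin (\<theta> x))"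
  proof (rule weight_comparison[where h=h and ?h1.0=h1 and ?h2.0=h2 and \<theta>=\<theta> and F=F and ?F1.0=F1
        and ?F2.0=F2 and ?F3.0=F3 and p=p and x=x and \<omega>=\<epsilon> and c=c])
    show "h 0 = 1" using \<phi>_init by (simp add: h_def)
    show "\<theta> 0 = 0" by (simp add: \<theta>_def)
  qed (use J h_pos dh d\<theta> K dF F1_pos schwarz F_sign h1_0 F_init in blast)+
  have "\<epsilon> * c * F x = c\<^sup>2" by (simp add: c_def power2_eq_square)
  then have "1 + c\<^sup>2 \<le> h x * F1 x"
    using cmp cos_plus_sin_le[of "\<theta> x" c] h_pos[OF \<open>x \<in> I\<close>] F1_pos[OF \<open>x \<in> I\<close>]
    by (intro weight_bound_from_comparison) auto
  then have "(1 + \<epsilon>\<^sup>2 * (F x)\<^sup>2) * norm (V1 x) \<le> (1 + \<epsilon>\<^sup>2 * (norm (\<phi> x))\<^sup>2) * F1 x"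
    using nz[OF \<open>x \<in> I\<close>] by (simp add: h_def c_def power_mult_distrib power2_norm_eq_inner field_simps)
  then show ?thesis
    by (simp add: field_simps add_pos_nonneg)
qed

lemma has_vd:
  fixes f :: "real \<Rightarrow> 'a::real_normed_vector"
  assumes "f differentiable at t"
  shows "(f has_vector_derivative vd f t) (at t)"
  using assms unfolding vd_def by (simp add: vector_derivative_works[symmetric])

lemma nonvanishing_imp_pos:
  fixes f :: "'a::topological_space \<Rightarrow> real"
  assumes "connected S" "continuous_on S f" "\<And>t. t \<in> S \<Longrightarrow> f t \<noteq> 0" "x0 \<in> S" "0 < f x0"
    and "t \<in> S"
  shows "0 < f t"
proof (rule ccontr)
  assume "\<not> 0 < f t"
  have "connected (f ` S)" using assms(2,1) by (rule connected_continuous_image)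
  then have "{f t..f x0} \<subseteq> f ` S"
    using assms(4,6) by (intro connected_contains_Icc) auto
  then have "0 \<in> f ` S" using \<open>\<not> 0 < f t\<close> assms(5) by auto
  then show False using assms(3) by auto
qed

lemma schwarzian_explicit:
  fixes F :: "real \<Rightarrow> real"
  assumes "(deriv F has_real_derivative deriv (deriv F) t) (at t)"
    and "(deriv (deriv F) has_real_derivative F3) (at t)" and "deriv F t \<noteq> 0"
  shows "schwarzian F t = (F3 * deriv F t - (deriv (deriv F) t)\<^sup>2) / (deriv F t)\<^sup>2
                          - 1/2 * (deriv (deriv F) t / deriv F t)\<^sup>2"
proof -
  have "deriv (\<lambda>x. deriv (deriv F) x / deriv F x) t
      = (F3 * deriv F t - deriv (deriv F) t * deriv (deriv F) t) / (deriv F t * deriv F t)"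
    using assms by (intro DERIV_imp_deriv DERIV_divide)
  then show ?thesis by (simp add: schwarzian_def power2_eq_square)
qed

theorem theorem1:
  fixes p F :: "real \<Rightarrow> real" and \<phi> :: "real \<Rightarrow> real ^ 'n"
  assumes p_cont: "continuous_on {-1<..<1} p"
    and p_pos: "\<forall>x\<in>{-1<..<1}. p x > 0"
    and p_even: "\<forall>x\<in>{-1<..<1}. p (-x) = p x"
    and p_disc: "disconjugate p"
    and F_diff: "\<forall>x\<in>{-1<..<1}. F differentiable at x \<and> deriv F differentiable at x
                   \<and> deriv (deriv F) differentiable at x"
    and F_nz: "\<forall>x\<in>{-1<..<1}. deriv F x \<noteq> 0"
    and F_ode: "\<forall>x\<in>{-1<..<1}. schwarzian F x = 2 * p x"
    and F_init: "F 0 = 0" "deriv F 0 = 1" "deriv (deriv F) 0 = 0"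
    and phi_diff: "\<forall>x\<in>{-1<..<1}. \<phi> differentiable at x \<and> vd \<phi> differentiable at x
                   \<and> vd (vd \<phi>) differentiable at x"
    and phi_C3: "continuous_on {-1<..<1} (vd (vd (vd \<phi>)))"
    and phi_nz: "\<forall>x\<in>{-1<..<1}. vd \<phi> x \<noteq> 0"
    and phi_init: "\<phi> 0 = 0" "norm (vd \<phi> 0) = 1" "vd \<phi> 0 \<bullet> vd (vd \<phi>) 0 = 0"
    and S1_le: "\<forall>x\<in>{-1<..<1}. ahlfors_S1 \<phi> x \<le> 2 * p x"
  shows "\<forall>x\<in>{-1<..<1}. norm (vd \<phi> x) \<le> deriv F x
           \<and> norm (vd \<phi> x) / (1 + (norm (\<phi> x))^2) \<le> deriv F x / (1 + (F x)^2)"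
proof
  fix x :: real assume x: "x \<in> {-1<..<1}"
  have dF: "\<And>t. t \<in> {-1<..<1} \<Longrightarrow> (F has_real_derivative deriv F t) (at t)
      \<and> has_derivs2 (deriv F) (deriv (deriv F)) (deriv (deriv (deriv F)) t) t"
    using F_diff by (simp add: DERIV_deriv_iff_real_differentiable)
  have F1_pos: "0 < deriv F t" if "t \<in> {-1<..<1}" for t
  proof (rule nonvanishing_imp_pos[of "{-1<..<1}" "deriv F" 0 t])
    show "continuous_on {-1<..<1} (deriv F)"
      using dF by (intro continuous_at_imp_continuous_on ballI DERIV_isCont) blast
  qed (use F_nz F_init(2) that in auto)
  have schwarz: "(deriv (deriv (deriv F)) t * deriv F t - (deriv (deriv F) t)\<^sup>2)
      / (deriv F t)\<^sup>2 - 1/2 * (deriv (deriv F) t / deriv F t)\<^sup>2 = 2 * p t" if t: "t \<in> {-1<..<1}" for t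
    using schwarzian_explicit[of F t] dF[OF t] F_nz F_ode t by auto
  note bound = curve_metric_bound[where a="-1" and b=1 and x=x and \<phi>=\<phi> and ?V1.0="vd \<phi>"
      and ?V2.0="vd (vd \<phi>)" and ?V3.0="vd (vd (vd \<phi>))" and p=p and F=F and ?F1.0="deriv F"
      and ?F2.0="deriv (deriv F)" and ?F3.0="deriv (deriv (deriv F))"]
  have "norm (vd \<phi> x) / (1 + \<epsilon>\<^sup>2 * (norm (\<phi> x))\<^sup>2) \<le> deriv F x / (1 + \<epsilon>\<^sup>2 * (F x)\<^sup>2)" for \<epsilon>
  proof (rule bound)
    fix t :: real assume t: "t \<in> {-1<..<1}"
    show "(\<phi> has_vector_derivative vd \<phi> t) (at t) \<and> (vd \<phi> has_vector_derivative vd (vd \<phi>) t) (at t)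
        \<and> (vd (vd \<phi>) has_vector_derivative vd (vd (vd \<phi>)) t) (at t)"
      using phi_diff t by (simp add: has_vd)
    show "(vd \<phi> t \<bullet> vd (vd (vd \<phi>)) t) / (norm (vd \<phi> t))\<^sup>2 - 3 * (vd \<phi> t \<bullet> vd (vd \<phi>) t)\<^sup>2 / (norm (vd \<phi> t))^4
        + 3/2 * (norm (vd (vd \<phi>) t))\<^sup>2 / (norm (vd \<phi> t))\<^sup>2 \<le> 2 * p t"
      using S1_le t unfolding ahlfors_S1_def by blast
  qed (use x phi_nz F1_pos schwarz dF phi_init F_init in auto)
  from this[of 0] this[of 1] show "norm (vd \<phi> x) \<le> deriv F x
      \<and> norm (vd \<phi> x) / (1 + (norm (\<phi> x))^2) \<le> deriv F x / (1 + (F x)^2)"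
    by simp
qed

end
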